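(* Let $1\le p<q$ be integers (not necessarily coprime), and let $u=0^{q-p}1^{p}$. Then for every binary word $w\in\{0,1\}^q$ with exactly $p$ ones, $$\mathcal{S}_i(u)\le \mathcal{S}_i(w)\quad\text{for all } 1\le i\le q.$$ In other words, the orbit of $u$ is the greatest element of the set $\mathbb{W}_{p,q}$ of orbits with respect to the majorization order $\prec$.
   Context: Binary alphabet $\{0,1\}$ with $0<1$; words of equal length are compared lexicographically. For a word $x=x_1\cdots x_n$, $(x)_2=\sum_{i=1}^n x_i2^{n-i}$. The cyclic shift is $\sigma(w_1\cdots w_n)=w_2\cdots w_nw_1$. For $w\in\{0,1\}^q$, the orbit $\mathcal{O}(w)=(\mathcal{O}_1(w),\dots,\mathcal{O}_q(w))$ is the list of the $q$ words $w,\sigma(w),\dots,\sigma^{q-1}(w)$ arranged in lexicographic order from smallest to largest (with repetition), and the base-2 orbit is $\mathcal{I}(w)=(\mathcal{I}_1(w),\dots,\mathcal{I}_q(w))$ with $\mathcal{I}_k(w)=(\mathcal{O}_k(w))_2$. Partial sums: $\mathcal{S}_i(w)=\sum_{k=1}^i\mathcal{I}_k(w)$. $\mathbb{W}_{p,q}$ denotes the set of orbits (words up to cyclic shift) of binary words of length $q$ with $p$ ones. For orbits $w,w'$, $w'\prec w$ means $\mathcal{S}_i(w')\ge\mathcal{S}_i(w)$ for all $1\le i\le q$. *)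

theory Defs
  imports Main "HOL-Library.List_Lexorder"
begin

text \<open>Binary words are lists of naturals with entries in {0,1}.
  The order on lists from List_Lexorder is the lexicographic order
  (on words of equal length this is the usual lexicographic order).\<close>

definition binary_word :: "nat \<Rightarrow> nat \<Rightarrow> nat list \<Rightarrow> bool" where
  "binary_word p q w \<longleftrightarrow> length w = q \<and> set w \<subseteq> {0,1} \<and> count_list w 1 = p"

definition base2 :: "nat list \<Rightarrow> nat" where
  "base2 x = (\<Sum>i<length x. x ! i * 2 ^ (length x - 1 - i))"

definition orbit :: "nat list \<Rightarrow> nat list list" where
  "orbit w = sort (map (\<lambda>k. rotate k w) [0..<length w])"

definition base2_orbit :: "nat list \<Rightarrow> nat \<Rightarrow> nat" where
  "base2_orbit w k = base2 (orbit w ! (k - 1))"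

definition partial_sum :: "nat list \<Rightarrow> nat \<Rightarrow> nat" where
  "partial_sum w i = (\<Sum>k=1..i. base2_orbit w k)"

end

theory Submission
  imports Defs "HOL-Library.Multiset" "HOL-Number_Theory.Cong"
begin

text \<open>Write \<open>a = q - p\<close>. The partial sum \<open>S\<^sub>i(w)\<close> is the least sum of the values of \<open>i\<close>
  distinct rotations of \<open>w\<close>. The rotations of \<open>u = 0\<^sup>a1\<^sup>p\<close> by \<open>k < a\<close> have the values
  \<open>(2\<^sup>p - 1) 2\<^sup>k\<close>, so for \<open>i \<le> a\<close> some \<open>i\<close> rotations of \<open>u\<close> sum to \<open>(2\<^sup>p - 1)(2\<^sup>i - 1)\<close>.
  Any \<open>i \<le> a\<close> rotations of \<open>w\<close> sum to at least this: rotations beginning with 1 exceed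
  those beginning with 0, and for rotations beginning with 0 one inducts on the length,
  rotating a 1 to the end of the word and deleting it. For \<open>i > a\<close> one passes to the
  \<open>q - i\<close> complementary rotations: the values of all rotations add up to \<open>p (2\<^sup>q - 1)\<close>, and
  the same bound for the bitwise complement of \<open>w\<close> shows that no \<open>q - i\<close> rotations of \<open>w\<close>
  sum to more than the \<open>q - i\<close> rotations of \<open>u\<close> by \<open>a, \<dots>, a + q - i - 1\<close>.\<close>

section \<open>Base-2 values of binary words\<close>

lemma base2_Nil [simp]: "base2 [] = 0"
  by (simp add: base2_def)

lemma base2_Cons [simp]: "base2 (a # xs) = a * 2 ^ length xs + base2 xs"
proof -
  have "base2 (a # xs) = (\<Sum>i<Suc (length xs). (a # xs) ! i * 2 ^ (length xs - i))"
    by (simp add: base2_def)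
  also have "\<dots> = a * 2 ^ length xs + (\<Sum>i<length xs. xs ! i * 2 ^ (length xs - Suc i))"
    by (subst sum.lessThan_Suc_shift) simp
  finally show ?thesis
    by (simp add: base2_def)
qed

lemma base2_append: "base2 (xs @ ys) = base2 xs * 2 ^ length ys + base2 ys"
  by (induction xs) (auto simp: algebra_simps power_add)

lemma base2_replicate_0 [simp]: "base2 (replicate n 0) = 0"
  by (induction n) auto

lemma base2_replicate_1: "base2 (replicate n 1) + 1 = 2 ^ n"
  by (induction n) auto

lemma base2_less: "set xs \<subseteq> {0,1} \<Longrightarrow> base2 xs < 2 ^ length xs"
proof (induction xs)
  case (Cons a xs)
  then have "a \<le> 1" "base2 xs < 2 ^ length xs"
    by auto
  moreover from \<open>a \<le> 1\<close> have "a * 2 ^ length xs \<le> 2 ^ length xs"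
    using mult_le_mono1[of a 1] by simp
  ultimately have "a * 2 ^ length xs + base2 xs < 2 * 2 ^ length xs"
    by linarith
  then show ?case
    by simp
qed simp

abbreviation flip :: "nat list \<Rightarrow> nat list" where
  "flip \<equiv> map (\<lambda>b. 1 - b)"

lemma base2_flip: "set xs \<subseteq> {0,1} \<Longrightarrow> base2 xs + base2 (flip xs) + 1 = 2 ^ length xs"
  by (induction xs) auto

lemma count_list_flip:
  "set w \<subseteq> {0,1} \<Longrightarrow> b \<in> {0,1} \<Longrightarrow> count_list (flip w) b = count_list w (1 - b)"
  by (induction w) auto

lemma count_list_0_plus_1: "set (w :: nat list) \<subseteq> {0,1} \<Longrightarrow> count_list w 0 + count_list w 1 = length w"
  by (induction w) auto

lemma sum_list_binary: "set (w :: nat list) \<subseteq> {0,1} \<Longrightarrow> sum_list w = count_list w 1"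
  by (induction w) auto

lemma base2_mono:
  assumes "xs \<le> ys" "length xs = length ys" "set xs \<subseteq> {0,1}" "set ys \<subseteq> {0,1}"
  shows "base2 xs \<le> base2 ys"
  using assms
proof (induction xs arbitrary: ys)
  case (Cons a xs)
  then obtain b ys' where ys: "ys = b # ys'"
    by (cases ys) auto
  from Cons.prems ys consider "a = 0" "b = 1" | "a = b" "xs \<le> ys'"
    by fastforce
  then show ?case
  proof cases
    case 1
    with base2_less[of xs] Cons.prems ys show ?thesis
      by simp
  next
    case 2
    with Cons.IH[of ys'] Cons.prems ys show ?thesis
      by simp
  qed
qed simp

lemma pow_count_0_plus_base2_le:
  "set y \<subseteq> {0,1} \<Longrightarrow> 2 ^ count_list y 0 + base2 y \<le> 2 ^ length y"
proof (induction y)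
  case (Cons a y)
  have "count_list y 0 \<le> length y"
    by (simp add: count_le_length)
  then have "2 ^ count_list y 0 \<le> (2::nat) ^ length y"
    by simp
  with Cons show ?case
    by auto
qed simp

section \<open>Partial sums as sums of smallest values\<close>

lemma sort_map_eq_map_sort_key: "sort (map g xs) = map g (sort_key g xs)"
  by (rule properties_for_sort) (simp_all add: mset_map)

lemma sum_list_take_sorted_le:
  fixes g :: "'a \<Rightarrow> 'b :: {linorder, ordered_comm_monoid_add}"
  assumes "sorted (map g ks)" "distinct ks" "J \<subseteq> set ks"
  shows "sum_list (take (card J) (map g ks)) \<le> sum g J"
  using assms
proof (induction ks arbitrary: J)
  case (Cons k ks)
  have fin: "finite J"
    using Cons.prems(3) finite_subset by blast
  show ?case
  proof (cases "J = {}")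
    case False
    \<comment> \<open>\<open>g k\<close> is matched with \<open>k\<close> itself if possible, otherwise with any element of \<open>J\<close>\<close>
    then obtain j where j: "j \<in> J" "k \<in> J \<longrightarrow> j = k"
      by blast
    have "g k \<le> g j"
      using Cons.prems(1,3) j by (cases "j = k") auto
    moreover have "sum_list (take (card (J - {j})) (map g ks)) \<le> sum g (J - {j})"
      using Cons j by (intro Cons.IH) auto
    ultimately have "g k + sum_list (take (card (J - {j})) (map g ks)) \<le> g j + sum g (J - {j})"
      by (rule add_mono)
    then show ?thesis
      using j fin False by (simp add: sum.remove card_gt_0_iff take_Cons')
  qed simp
qed simp

lemma sum_list_take_sort_le:
  fixes g :: "'a \<Rightarrow> 'b :: {linorder, ordered_comm_monoid_add}"
  assumes "distinct xs" "J \<subseteq> set xs"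
  shows "sum_list (take (card J) (sort (map g xs))) \<le> sum g J"
  using assms by (simp add: sort_map_eq_map_sort_key sum_list_take_sorted_le)

lemma sum_list_take_sort_eq_sum:
  fixes g :: "'a \<Rightarrow> 'b :: {linorder, ordered_comm_monoid_add}"
  assumes "distinct xs" "i \<le> length xs"
  obtains J where "J \<subseteq> set xs" "card J = i" "sum_list (take i (sort (map g xs))) = sum g J"
proof
  let ?ks = "take i (sort_key g xs)"
  show "set ?ks \<subseteq> set xs"
    by (metis set_sort set_take_subset)
  show "card (set ?ks) = i"
    using assms by (simp add: distinct_card)
  show "sum_list (take i (sort (map g xs))) = sum g (set ?ks)"
    using assms by (simp add: sort_map_eq_map_sort_key take_map sum_list_distinct_conv_sum_set)
qed

definition rot_value :: "nat list \<Rightarrow> nat \<Rightarrow> nat" where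
  "rot_value w k = base2 (rotate k w)"

lemma partial_sum_eq_sum_smallest:
  assumes "set w \<subseteq> {0,1}" "i \<le> length w"
  shows "partial_sum w i = sum_list (take i (sort (map (rot_value w) [0..<length w])))"
proof -
  let ?R = "map (\<lambda>k. rotate k w) [0..<length w]"
  have "map (rot_value w) [0..<length w] = map base2 ?R"
    by (simp add: rot_value_def)
  then have "mset (map base2 (sort ?R)) = mset (map (rot_value w) [0..<length w])"
    by (metis mset_map mset_sort)
  moreover have "sorted (map base2 (sort ?R))"
    unfolding sorted_map
    by (rule sorted_wrt_mono_rel[OF _ sorted_sort]) (use assms(1) in \<open>auto intro!: base2_mono\<close>)
  ultimately have sorted_values: "sort (map (rot_value w) [0..<length w]) = map base2 (orbit w)"
    unfolding orbit_def by (rule properties_for_sort)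
  have "partial_sum w i = (\<Sum>j<i. base2 (orbit w ! j))"
    unfolding partial_sum_def base2_orbit_def by (induction i) auto
  also have "\<dots> = sum_list (take i (map base2 (orbit w)))"
    using assms(2) by (simp add: sum_list_sum_nth atLeast0LessThan min_def orbit_def)
  finally show ?thesis
    by (simp add: sorted_values)
qed

section \<open>Values of rotations\<close>

lemma rotate_conv_nth_Cons: "k < length w \<Longrightarrow> rotate k w = w ! k # drop (Suc k) w @ take k w"
  by (simp add: rotate_drop_take Cons_nth_drop_Suc)

lemma rot_value_conv_nth:
  assumes "k < length w"
  shows "rot_value w k = w ! k * 2 ^ (length w - 1) + base2 (drop (Suc k) w @ take k w)"
  using assms by (simp add: rot_value_def rotate_conv_nth_Cons)

lemma rot_value_ge_if_nth_1:
  assumes "k < length w" "w ! k = 1"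
  shows "2 ^ (length w - 1) \<le> rot_value w k"
  using assms by (simp add: rot_value_conv_nth)

lemma rot_value_less_if_nth_0:
  assumes "set w \<subseteq> {0,1}" "k < length w" "w ! k = 0"
  shows "rot_value w k < 2 ^ (length w - 1)"
proof -
  have "set (drop (Suc k) w @ take k w) \<subseteq> {0,1}"
    using assms(1) set_drop_subset[of "Suc k" w] set_take_subset[of k w] by auto
  with base2_less assms(2) have "base2 (drop (Suc k) w @ take k w) < 2 ^ (length w - 1)"
    by fastforce
  with assms show ?thesis
    by (simp add: rot_value_conv_nth)
qed

lemma rot_value_Suc:
  assumes "k < length w"
  shows "rot_value w (Suc k) + w ! k * (2 ^ length w - 1) = 2 * rot_value w k"
proof -
  let ?y = "drop (Suc k) w @ take k w"
  have "rotate (Suc k) w = ?y @ [w ! k]"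
    using assms by (simp add: rotate_conv_nth_Cons flip: rotate1_rotate_swap)
  then have "rot_value w (Suc k) = 2 * base2 ?y + w ! k"
    by (simp add: rot_value_def base2_append)
  moreover have "w ! k * (2 ^ length w - 1) + w ! k = w ! k * 2 ^ length w"
    by (simp add: diff_mult_distrib2 le_add_diff_inverse2)
  moreover have "w ! k * 2 ^ length w = 2 * (w ! k * 2 ^ (length w - 1))"
    using assms by (cases "length w") auto
  ultimately show ?thesis
    using rot_value_conv_nth[OF assms] by linarith
qed

lemma sum_rot_value: "(\<Sum>k<length w. rot_value w k) = sum_list w * (2 ^ length w - 1)"
proof -
  let ?n = "length w"
  have "rot_value w ?n = rot_value w 0"
    by (simp add: rot_value_def)
  then have "(\<Sum>k<?n. rot_value w (Suc k)) = (\<Sum>k<?n. rot_value w k)"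
    using sum.lessThan_Suc_shift[of "rot_value w" ?n] sum.lessThan_Suc[of "rot_value w" ?n] by simp
  moreover have "(\<Sum>k<?n. rot_value w (Suc k)) + sum_list w * (2 ^ ?n - 1) = 2 * (\<Sum>k<?n. rot_value w k)"
    by (simp add: sum_list_sum_nth atLeast0LessThan sum_distrib_right sum_distrib_left
        flip: sum.distrib rot_value_Suc)
  ultimately show ?thesis
    by linarith
qed

lemma rot_value_flip:
  assumes "set w \<subseteq> {0,1}"
  shows "rot_value w k + rot_value (flip w) k + 1 = 2 ^ length w"
  using assms base2_flip[of "rotate k w"] by (simp add: rot_value_def rotate_map)

lemma rot_value_rotate: "rot_value (rotate c w) k = rot_value w ((k + c) mod length w)"
  by (simp add: rot_value_def rotate_rotate rotate_conv_mod[of "k + c" w])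

lemma rot_value_snoc_1:
  assumes "k < length x"
  shows "rot_value (x @ [1]) k + base2 (take k x) = 2 * rot_value x k + 2 ^ k"
proof -
  have "rotate k (x @ [1]) = drop k x @ [1] @ take k x" "rotate k x = drop k x @ take k x"
    using assms by (simp_all add: rotate_drop_take)
  then show ?thesis
    using assms by (simp add: rot_value_def base2_append algebra_simps power_add)
qed

lemma rot_value_replicate_0_1:
  assumes "k \<le> a" "k < a + p"
  shows "rot_value (replicate a 0 @ replicate p 1) k = (2 ^ p - 1) * 2 ^ k"
proof -
  have "rotate k (replicate a 0 @ replicate p 1) = replicate (a - k) 0 @ replicate p 1 @ replicate k 0"
    using assms by (simp add: rotate_drop_take)
  then have "rot_value (replicate a 0 @ replicate p 1) k = base2 (replicate p 1) * 2 ^ k"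
    unfolding rot_value_def \<open>rotate k _ = _\<close> by (simp add: base2_append)
  then show ?thesis
    using base2_replicate_1[of p] by simp
qed

section \<open>Bounds for sums of values of rotations\<close>

definition positions :: "nat list \<Rightarrow> nat \<Rightarrow> nat set" where
  "positions w b = {k. k < length w \<and> w ! k = b}"

lemma finite_positions [simp]: "finite (positions w b)"
  by (simp add: positions_def)

lemma card_positions: "card (positions w b) = count_list w b"
  by (simp add: positions_def count_list_eq_length_filter length_filter_conv_card eq_commute)

lemma bij_betw_add_mod:
  assumes "0 < n"
  shows "bij_betw (\<lambda>k. (k + c) mod n) {..<n} {..<(n::nat)}"
proof -
  have "inj_on (\<lambda>k. (k + c) mod n) {..<n}"
    by (auto simp: inj_on_def cong_add_rcancel_nat[unfolded cong_def])
  moreover have "(\<lambda>k. (k + c) mod n) ` {..<n} \<subseteq> {..<n}"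
    using assms by auto
  ultimately show ?thesis
    by (simp add: bij_betw_def endo_inj_surj)
qed

lemma sum_rot_value_rotate_reindex:
  assumes "J \<subseteq> positions w b"
  obtains J' where "J' \<subseteq> positions (rotate c w) b" "card J' = card J"
    "(\<Sum>k\<in>J'. rot_value (rotate c w) k) = (\<Sum>k\<in>J. rot_value w k)"
proof (cases "length w = 0")
  case True
  with assms have "J = {}"
    by (auto simp: positions_def)
  with that[of "{}"] show ?thesis
    by simp
next
  case False
  define n where "n = length w"
  define f where "f k = (k + c) mod n" for k
  define J' where "J' = {k. k < n \<and> f k \<in> J}"
  have bij: "bij_betw f {..<n} {..<n}"
    using False bij_betw_add_mod unfolding n_def f_def by blast
  have "J \<subseteq> {..<n}"
    using assms by (auto simp: positions_def n_def)
  then have image: "f ` J' = J"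
    using bij_betw_imp_surj_on[OF bij] unfolding J'_def by (auto simp: image_iff)
  have inj: "inj_on f J'"
    using bij_betw_imp_inj_on[OF bij] by (rule inj_on_subset) (auto simp: J'_def)
  show ?thesis
  proof
    show "J' \<subseteq> positions (rotate c w) b"
      using assms by (auto simp: J'_def positions_def n_def f_def nth_rotate add.commute)
    show "card J' = card J"
      using card_image[OF inj] image by simp
    have "(\<Sum>k\<in>J'. rot_value (rotate c w) k) = (\<Sum>k\<in>J'. rot_value w (f k))"
      by (simp add: rot_value_rotate f_def n_def)
    also have "\<dots> = (\<Sum>k\<in>J. rot_value w k)"
      using sum.reindex[OF inj, of "rot_value w"] image by simp
    finally show "(\<Sum>k\<in>J'. rot_value (rotate c w) k) = (\<Sum>k\<in>J. rot_value w k)" .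
  qed
qed

lemma pow_card_plus_sum_base2_take_le:
  assumes "set x \<subseteq> {0,1}" "J \<subseteq> positions x 0"
  shows "2 ^ card J + (\<Sum>k\<in>J. base2 (take k x)) \<le> 1 + (\<Sum>k\<in>J. 2 ^ k)"
  using finite_subset[OF assms(2) finite_positions] assms(2)
proof (induction J rule: finite_linorder_max_induct)
  case (insert b A)
  have "b < length x"
    using insert.prems by (auto simp: positions_def)
  have "A \<subseteq> positions (take b x) 0"
    using insert by (auto simp: positions_def)
  then have "card A \<le> count_list (take b x) 0"
    by (metis card_mono card_positions finite_positions)
  moreover have "2 ^ count_list (take b x) 0 + base2 (take b x) \<le> 2 ^ b"
    using pow_count_0_plus_base2_le[of "take b x"] assms(1) set_take_subset \<open>b < length x\<close>
    by fastforce
  ultimately have "2 ^ card A + base2 (take b x) \<le> 2 ^ b"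
    by (meson add_le_mono1 le_trans one_le_numeral power_increasing)
  moreover have "2 ^ card A + (\<Sum>k\<in>A. base2 (take k x)) \<le> 1 + (\<Sum>k\<in>A. 2 ^ k)"
    using insert by auto
  moreover have "b \<notin> A"
    using insert.hyps(2) by auto
  ultimately show ?case
    using insert.hyps(1) by simp
qed simp

lemma sum_rot_value_positions_0_ge:
  assumes "set w \<subseteq> {0,1}" "J \<subseteq> positions w 0"
  shows "(2 ^ count_list w 1 - 1) * (2 ^ card J - 1) \<le> (\<Sum>k\<in>J. rot_value w k)"
  using assms
proof (induction w arbitrary: J rule: length_induct)
  case (1 w)
  show ?case
  proof (cases "1 \<in> set w")
    case False
    then show ?thesis
      by (simp add: count_list_0_iff)
  next
    case True
    then obtain ys zs where w: "w = ys @ 1 # zs"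
      by (meson split_list)
    define x where "x = zs @ ys"
    have rotated: "rotate (Suc (length ys)) w = x @ [1]"
      by (simp add: w x_def rotate_append flip: rotate1_rotate_swap)
    obtain J' where J': "J' \<subseteq> positions (x @ [1]) 0" "card J' = card J"
      "(\<Sum>k\<in>J'. rot_value (x @ [1]) k) = (\<Sum>k\<in>J. rot_value w k)"
      using sum_rot_value_rotate_reindex[OF "1.prems"(2), of "Suc (length ys)"] rotated by metis
    have J'x: "J' \<subseteq> positions x 0"
      using J'(1) by (auto simp: positions_def nth_append less_Suc_eq)
    have x01: "set x \<subseteq> {0,1}"
      using "1.prems"(1) by (auto simp: w x_def)
    have count_x: "count_list w 1 = Suc (count_list x 1)"
      by (simp add: w x_def)
    define P :: nat where "P = 2 ^ count_list x 1"
    define M :: nat where "M = 2 ^ card J'"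
    have "length x < length w"
      by (simp add: w x_def)
    then have IH: "(P - 1) * (M - 1) \<le> (\<Sum>k\<in>J'. rot_value x k)"
      using "1.IH" x01 J'x unfolding P_def M_def by blast
    have "(\<Sum>k\<in>J'. rot_value (x @ [1]) k) + (\<Sum>k\<in>J'. base2 (take k x))
        = 2 * (\<Sum>k\<in>J'. rot_value x k) + (\<Sum>k\<in>J'. 2 ^ k)"
      using J'x rot_value_snoc_1
      by (auto simp: positions_def sum_distrib_left simp flip: sum.distrib intro!: sum.cong)
    moreover have "M + (\<Sum>k\<in>J'. base2 (take k x)) \<le> 1 + (\<Sum>k\<in>J'. 2 ^ k)"
      unfolding M_def using pow_card_plus_sum_base2_take_le[OF x01 J'x] .
    moreover have "1 \<le> M"
      by (simp add: M_def)
    moreover have "0 < P"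
      by (simp add: P_def)
    then have "(2 * P - 1) * (M - 1) = 2 * ((P - 1) * (M - 1)) + (M - 1)"
      by (cases P) (simp_all add: algebra_simps)
    ultimately have "(2 * P - 1) * (M - 1) \<le> (\<Sum>k\<in>J'. rot_value (x @ [1]) k)"
      using IH by linarith
    then show ?thesis
      using J' count_x by (simp add: P_def M_def)
  qed
qed

text \<open>Rotations starting with a 1 exceed those starting with a 0, so trading the 1-positions
  of \<open>J\<close> for unused 0-positions only decreases the sum.\<close>
lemma sum_rot_value_ge:
  assumes "set w \<subseteq> {0,1}" "J \<subseteq> {..<length w}" "card J \<le> count_list w 0"
  shows "(2 ^ count_list w 1 - 1) * (2 ^ card J - 1) \<le> (\<Sum>k\<in>J. rot_value w k)"
proof -
  let ?Z = "positions w 0"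
  define J0 where "J0 = J \<inter> ?Z"
  define J1 where "J1 = J - ?Z"
  have fin: "finite J0" "finite J1"
    using assms(2) finite_subset unfolding J0_def J1_def by blast+
  have J_split: "J = J0 \<union> J1" "J0 \<inter> J1 = {}"
    unfolding J0_def J1_def by auto
  have "card J = card J0 + card J1"
    using fin J_split card_Un_disjoint by metis
  moreover have "card (?Z - J) = card ?Z - card J0"
    by (simp add: card_Diff_subset_Int J0_def Int_commute)
  ultimately have "card J1 \<le> card (?Z - J)"
    using assms(3) by (simp add: card_positions)
  then obtain K where K: "K \<subseteq> ?Z - J" "card K = card J1"
    by (meson obtain_subset_with_card_n)
  have fin_K: "finite K"
    using finite_subset[OF K(1)] by simp
  have "(\<Sum>k\<in>K. rot_value w k) \<le> (\<Sum>k\<in>K. 2 ^ (length w - 1))"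
    using K(1) rot_value_less_if_nth_0[OF assms(1)]
    by (intro sum_mono less_imp_le) (auto simp: positions_def)
  also have "\<dots> = (\<Sum>k\<in>J1. 2 ^ (length w - 1))"
    using K(2) by simp
  also have "\<dots> \<le> (\<Sum>k\<in>J1. rot_value w k)"
  proof (rule sum_mono)
    fix k assume "k \<in> J1"
    then have "k < length w" "w ! k \<noteq> 0"
      using assms(2) unfolding J1_def positions_def by auto
    moreover have "w ! k \<in> {0,1}"
      using assms(1) nth_mem[OF \<open>k < length w\<close>] by blast
    ultimately show "2 ^ (length w - 1) \<le> rot_value w k"
      using rot_value_ge_if_nth_1 by auto
  qed
  finally have K_J1: "(\<Sum>k\<in>K. rot_value w k) \<le> (\<Sum>k\<in>J1. rot_value w k)" .
  have disj: "J0 \<inter> K = {}"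
    using K(1) unfolding J0_def by auto
  have "(2 ^ count_list w 1 - 1) * (2 ^ card (J0 \<union> K) - 1) \<le> (\<Sum>k\<in>J0 \<union> K. rot_value w k)"
    using K(1) by (intro sum_rot_value_positions_0_ge[OF assms(1)]) (auto simp: J0_def)
  also have "\<dots> \<le> (\<Sum>k\<in>J. rot_value w k)"
    using K_J1 fin fin_K disj J_split by (simp add: sum.union_disjoint)
  finally show ?thesis
    using fin fin_K disj J_split K(2) by (simp add: card_Un_disjoint)
qed

lemma sum_rot_value_plus_sum_rot_value_flip:
  assumes "set w \<subseteq> {0,1}"
  shows "(\<Sum>k\<in>J. rot_value w k) + (\<Sum>k\<in>J. rot_value (flip w) k) + card J = card J * 2 ^ length w"
proof -
  have "(\<Sum>k\<in>J. rot_value w k) + (\<Sum>k\<in>J. rot_value (flip w) k) + card J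
      = (\<Sum>k\<in>J. rot_value w k + rot_value (flip w) k + 1)"
    by (simp only: sum.distrib) simp
  also have "\<dots> = card J * 2 ^ length w"
    using rot_value_flip[OF assms] by simp
  finally show ?thesis .
qed

lemma sum_rot_value_le:
  assumes "set w \<subseteq> {0,1}" "J \<subseteq> {..<length w}" "card J \<le> count_list w 1"
  shows "(\<Sum>k\<in>J. rot_value w k) + (2 ^ count_list w 0 - 1) * (2 ^ card J - 1)
    \<le> card J * (2 ^ length w - 1)"
proof -
  have flip01: "set (flip w) \<subseteq> {0,1}"
    by auto
  have "(2 ^ count_list w 0 - 1) * (2 ^ card J - 1) \<le> (\<Sum>k\<in>J. rot_value (flip w) k)"
    using sum_rot_value_ge[OF flip01] assms count_list_flip[OF assms(1)] by simp
  moreover have "(\<Sum>k\<in>J. rot_value w k) + (\<Sum>k\<in>J. rot_value (flip w) k) + card J = card J * 2 ^ length w"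
    by (rule sum_rot_value_plus_sum_rot_value_flip[OF assms(1)])
  moreover have "card J * (2 ^ length w - 1) + card J = card J * 2 ^ length w"
    by (simp add: diff_mult_distrib2 le_add_diff_inverse2)
  ultimately show ?thesis
    by linarith
qed

lemma sum_rot_value_plus_sum_rot_value_Diff:
  assumes "J \<subseteq> {..<length w}"
  shows "(\<Sum>k\<in>J. rot_value w k) + (\<Sum>k\<in>{..<length w} - J. rot_value w k) = sum_list w * (2 ^ length w - 1)"
  using sum.subset_diff[OF assms finite_lessThan, of "rot_value w"] sum_rot_value[of w] by simp

section \<open>The extremal word\<close>

lemma sum_pow2_lessThan: "(\<Sum>k<m. (2::nat) ^ k) + 1 = 2 ^ m"
  by (induction m) auto

lemma sum_rot_value_replicate_0_1_lessThan:
  assumes "m \<le> a"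
  shows "(\<Sum>k<m. rot_value (replicate a 0 @ replicate p 1) k) = (2 ^ p - 1) * (2 ^ m - 1)"
proof -
  have "(\<Sum>k<m. rot_value (replicate a 0 @ replicate p 1) k) = (\<Sum>k<m. (2 ^ p - 1) * 2 ^ k)"
    using assms by (intro sum.cong refl rot_value_replicate_0_1) auto
  also have "\<dots> = (2 ^ p - 1) * (\<Sum>k<m. 2 ^ k)"
    by (simp add: sum_distrib_left)
  also have "\<dots> = (2 ^ p - 1) * (2 ^ m - 1)"
    using sum_pow2_lessThan[of m] by (metis add_diff_cancel_right')
  finally show ?thesis .
qed

lemma sum_rot_value_replicate_0_1_ones:
  assumes "j \<le> p"
  shows "(\<Sum>k\<in>{a..<a+j}. rot_value (replicate a 0 @ replicate p 1) k) + (2 ^ a - 1) * (2 ^ j - 1)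
    = j * (2 ^ (a + p) - 1)"
proof -
  let ?u = "replicate a 0 @ replicate p (1::nat)"
  have "flip ?u = replicate a 1 @ replicate p 0"
    by simp
  then have flip_u: "rotate a (flip ?u) = replicate p 0 @ replicate a 1"
    using rotate_append[of "replicate a (1::nat)" "replicate p 0"] by simp
  have "(\<Sum>k\<in>{a..<a+j}. rot_value (flip ?u) k) = (\<Sum>t<j. rot_value (flip ?u) (t + a))"
    using sum.shift_bounds_nat_ivl[of "rot_value (flip ?u)" 0 a j]
    by (simp add: atLeast0LessThan add.commute)
  also have "\<dots> = (\<Sum>t<j. rot_value (rotate a (flip ?u)) t)"
    using assms by (intro sum.cong) (simp_all add: rot_value_rotate)
  also have "\<dots> = (\<Sum>t<j. rot_value (replicate p 0 @ replicate a 1) t)"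
    unfolding flip_u ..
  also have "\<dots> = (2 ^ a - 1) * (2 ^ j - 1)"
    using assms by (rule sum_rot_value_replicate_0_1_lessThan)
  finally have "(\<Sum>k\<in>{a..<a+j}. rot_value (flip ?u) k) = (2 ^ a - 1) * (2 ^ j - 1)" .
  moreover have "(\<Sum>k\<in>{a..<a+j}. rot_value ?u k) + (\<Sum>k\<in>{a..<a+j}. rot_value (flip ?u) k) + j
      = j * 2 ^ (a + p)"
    using sum_rot_value_plus_sum_rot_value_flip[of ?u "{a..<a+j}"] by fastforce
  moreover have "j * (2 ^ (a + p) - 1) + j = j * 2 ^ (a + p)"
    by (simp add: diff_mult_distrib2 le_add_diff_inverse2)
  ultimately show ?thesis
    by linarith
qed

lemma sum_rot_value_replicate_0_1_lessThan_le:
  assumes "set w \<subseteq> {0,1}" "length w = a + p" "count_list w 1 = p" "J \<subseteq> {..<a + p}"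
    and "card J \<le> a"
  shows "(\<Sum>k<card J. rot_value (replicate a 0 @ replicate p 1) k) \<le> (\<Sum>k\<in>J. rot_value w k)"
proof -
  have "count_list w 0 = a"
    using count_list_0_plus_1[OF assms(1)] assms(2,3) by simp
  then have "(2 ^ p - 1) * (2 ^ card J - 1) \<le> (\<Sum>k\<in>J. rot_value w k)"
    using sum_rot_value_ge[OF assms(1)] assms by simp
  then show ?thesis
    using sum_rot_value_replicate_0_1_lessThan[OF assms(5)] by simp
qed

lemma sum_rot_value_replicate_0_1_Diff_le:
  assumes "set w \<subseteq> {0,1}" "length w = a + p" "count_list w 1 = p" "J \<subseteq> {..<a + p}"
    and "j \<le> p" "card J + j = a + p"
  shows "(\<Sum>k\<in>{..<a + p} - {a..<a + j}. rot_value (replicate a 0 @ replicate p 1) k)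
    \<le> (\<Sum>k\<in>J. rot_value w k)"
proof -
  let ?u = "replicate a 0 @ replicate p (1::nat)"
  let ?L = "{a..<a + j}"
  have "count_list w 0 = a"
    using count_list_0_plus_1[OF assms(1)] assms(2,3) by simp
  moreover have "card ({..<a + p} - J) = j"
    using assms(4,6) by (simp add: card_Diff_subset finite_subset)
  ultimately have w_complement: "(\<Sum>k\<in>{..<a + p} - J. rot_value w k) + (2 ^ a - 1) * (2 ^ j - 1)
      \<le> j * (2 ^ (a + p) - 1)"
    using sum_rot_value_le[OF assms(1), of "{..<a + p} - J"] assms(2,3,5) by auto
  have w_split: "(\<Sum>k\<in>J. rot_value w k) + (\<Sum>k\<in>{..<a + p} - J. rot_value w k)
      = p * (2 ^ (a + p) - 1)"
    using sum_rot_value_plus_sum_rot_value_Diff[of J w] assms by (simp add: sum_list_binary)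
  have u_L: "(\<Sum>k\<in>?L. rot_value ?u k) + (2 ^ a - 1) * (2 ^ j - 1) = j * (2 ^ (a + p) - 1)"
    using assms(5) by (rule sum_rot_value_replicate_0_1_ones)
  have "?L \<subseteq> {..<a + p}"
    using assms(5) by auto
  then have u_split: "(\<Sum>k\<in>?L. rot_value ?u k) + (\<Sum>k\<in>{..<a + p} - ?L. rot_value ?u k)
      = p * (2 ^ (a + p) - 1)"
    using sum_rot_value_plus_sum_rot_value_Diff[of ?L ?u] by (simp add: sum_list_replicate)
  from w_complement w_split u_L u_split show ?thesis
    by linarith
qed

lemma exists_subset_sum_rot_value_replicate_0_1_le:
  assumes "set w \<subseteq> {0,1}" "length w = a + p" "count_list w 1 = p" "J \<subseteq> {..<a + p}"
  obtains J' where "J' \<subseteq> {..<a + p}" "card J' = card J"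
    "(\<Sum>k\<in>J'. rot_value (replicate a 0 @ replicate p 1) k) \<le> (\<Sum>k\<in>J. rot_value w k)"
proof (cases "card J \<le> a")
  case True
  then show ?thesis
    using sum_rot_value_replicate_0_1_lessThan_le[OF assms True] by (intro that) auto
next
  case False
  define j where "j = a + p - card J"
  have "card J \<le> a + p"
    using card_mono[OF finite_lessThan assms(4)] by simp
  then have j: "j \<le> p" "card J + j = a + p"
    using False unfolding j_def by linarith+
  then have "card ({..<a + p} - {a..<a + j}) = card J"
    by (subst card_Diff_subset) auto
  then show ?thesis
    using sum_rot_value_replicate_0_1_Diff_le[OF assms j] by (intro that) auto
qed

theorem theorem4:
  fixes p q :: nat and w :: "nat list"
  assumes "1 \<le> p" and "p < q"
    and "binary_word p q w"
  shows "\<forall>i. 1 \<le> i \<and> i \<le> q \<longrightarrow>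
           partial_sum (replicate (q - p) 0 @ replicate p 1) i \<le> partial_sum w i"
proof (intro allI impI)
  fix i assume i: "1 \<le> i \<and> i \<le> q"
  let ?u = "replicate (q - p) 0 @ replicate p (1::nat)"
  have u: "set ?u \<subseteq> {0,1}" "length ?u = q"
    using assms(2) by auto
  have w: "set w \<subseteq> {0,1}" "length w = (q - p) + p" "count_list w 1 = p"
    using assms(2,3) unfolding binary_word_def by auto
  obtain J where J: "J \<subseteq> {..<q}" "card J = i" "partial_sum w i = (\<Sum>k\<in>J. rot_value w k)"
    using partial_sum_eq_sum_smallest[OF w(1)] sum_list_take_sort_eq_sum[of "[0..<q]" i "rot_value w"]
      i w(2) assms(2) by (auto simp: atLeast0LessThan)
  obtain J' where J': "J' \<subseteq> {..<q}" "card J' = i"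
    "(\<Sum>k\<in>J'. rot_value ?u k) \<le> (\<Sum>k\<in>J. rot_value w k)"
    using exists_subset_sum_rot_value_replicate_0_1_le[OF w, of J] J assms(2) by auto
  have "partial_sum ?u i \<le> (\<Sum>k\<in>J'. rot_value ?u k)"
    using partial_sum_eq_sum_smallest[OF u(1), of i] sum_list_take_sort_le[of "[0..<q]" J' "rot_value ?u"]
      J' i u(2) by (auto simp: atLeast0LessThan)
  with J J' show "partial_sum ?u i \<le> partial_sum w i"
    by simp
qed

end
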